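(* Let $X$ be a hyperbolic approximation of $Z$. Any two vertices $v,v'\in V$ can be connected in $X$ by a geodesic which contains at most one horizontal edge; if it contains such an edge, this edge lies on the lowest level attained by the geodesic.
   Context: Hyperbolic approximation: let $(Z,d)$ be a bounded metric space with at least two points and fix $0<r\le1/6$. Let $k_0$ be the largest integer with $\operatorname{diam}Z<r^{k_0}$. For each integer $k\ge k_0$ choose a maximal $r^k$-separated subset $V_k\subset Z$. Vertex set $V=\bigsqcup_{k\ge k_0}V_k$ (disjoint union), level $\ell(v)=k$ for $v\in V_k$, ball $B(v)=\{z:d(z,v)<2r^k\}$ with closure $\overline B(v)$. Edges: $v,v'$ of equal level with $\overline B(v)\cap\overline B(v')\neq\emptyset$ (horizontal edges), or levels differing by one with the ball of the higher-level vertex contained in the ball of the lower-level one (radial edges). Path metric with unit edges, denoted $|vv'|$. *)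

theory Defs
  imports "HOL-Analysis.Analysis"
begin

definition mdiam :: "'a set \<Rightarrow> ('a \<Rightarrow> 'a \<Rightarrow> real) \<Rightarrow> real" where
  "mdiam Z d = Sup {d x y | x y. x \<in> Z \<and> y \<in> Z}"

definition separated_set :: "'a set \<Rightarrow> ('a \<Rightarrow> 'a \<Rightarrow> real) \<Rightarrow> real \<Rightarrow> 'a set \<Rightarrow> bool" where
  "separated_set Z d \<epsilon> S \<longleftrightarrow> S \<subseteq> Z \<and> (\<forall>x\<in>S. \<forall>y\<in>S. x \<noteq> y \<longrightarrow> d x y \<ge> \<epsilon>)"

definition maximal_separated :: "'a set \<Rightarrow> ('a \<Rightarrow> 'a \<Rightarrow> real) \<Rightarrow> real \<Rightarrow> 'a set \<Rightarrow> bool" where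
  "maximal_separated Z d \<epsilon> S \<longleftrightarrow> separated_set Z d \<epsilon> S \<and>
     (\<forall>T. separated_set Z d \<epsilon> T \<and> S \<subseteq> T \<longrightarrow> T = S)"

definition is_k0 :: "'a set \<Rightarrow> ('a \<Rightarrow> 'a \<Rightarrow> real) \<Rightarrow> real \<Rightarrow> int \<Rightarrow> bool" where
  "is_k0 Z d r k \<longleftrightarrow> mdiam Z d < r powi k \<and> (\<forall>j. mdiam Z d < r powi j \<longrightarrow> j \<le> k)"

definition hyp_approx :: "'a set \<Rightarrow> ('a \<Rightarrow> 'a \<Rightarrow> real) \<Rightarrow> real \<Rightarrow> int \<Rightarrow> (int \<Rightarrow> 'a set) \<Rightarrow> bool" where
  "hyp_approx Z d r k0 V \<longleftrightarrow>
     Metric_space Z d \<and> Metric_space.mbounded Z d Z \<and> (\<exists>x\<in>Z. \<exists>y\<in>Z. x \<noteq> y) \<and>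
     0 < r \<and> r \<le> 1/6 \<and> is_k0 Z d r k0 \<and>
     (\<forall>k\<ge>k0. maximal_separated Z d (r powi k) (V k))"

definition hvertices :: "int \<Rightarrow> (int \<Rightarrow> 'a set) \<Rightarrow> (int \<times> 'a) set" where
  "hvertices k0 V = {(k, x). k0 \<le> k \<and> x \<in> V k}"

definition hball :: "'a set \<Rightarrow> ('a \<Rightarrow> 'a \<Rightarrow> real) \<Rightarrow> real \<Rightarrow> int \<times> 'a \<Rightarrow> 'a set" where
  "hball Z d r v = {z \<in> Z. d z (snd v) < 2 * r powi (fst v)}"

definition hball_closure :: "'a set \<Rightarrow> ('a \<Rightarrow> 'a \<Rightarrow> real) \<Rightarrow> real \<Rightarrow> int \<times> 'a \<Rightarrow> 'a set" where
  "hball_closure Z d r v = Metric_space.mtopology Z d closure_of (hball Z d r v)"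

definition horizontal_edge :: "'a set \<Rightarrow> ('a \<Rightarrow> 'a \<Rightarrow> real) \<Rightarrow> real \<Rightarrow> int \<Rightarrow> (int \<Rightarrow> 'a set)
    \<Rightarrow> int \<times> 'a \<Rightarrow> int \<times> 'a \<Rightarrow> bool" where
  "horizontal_edge Z d r k0 V v w \<longleftrightarrow>
     v \<in> hvertices k0 V \<and> w \<in> hvertices k0 V \<and> v \<noteq> w \<and> fst v = fst w \<and>
     hball_closure Z d r v \<inter> hball_closure Z d r w \<noteq> {}"

definition radial_edge :: "'a set \<Rightarrow> ('a \<Rightarrow> 'a \<Rightarrow> real) \<Rightarrow> real \<Rightarrow> int \<Rightarrow> (int \<Rightarrow> 'a set)
    \<Rightarrow> int \<times> 'a \<Rightarrow> int \<times> 'a \<Rightarrow> bool" where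
  "radial_edge Z d r k0 V v w \<longleftrightarrow>
     v \<in> hvertices k0 V \<and> w \<in> hvertices k0 V \<and>
     ((fst w = fst v + 1 \<and> hball Z d r w \<subseteq> hball Z d r v) \<or>
      (fst v = fst w + 1 \<and> hball Z d r v \<subseteq> hball Z d r w))"

definition hedge :: "'a set \<Rightarrow> ('a \<Rightarrow> 'a \<Rightarrow> real) \<Rightarrow> real \<Rightarrow> int \<Rightarrow> (int \<Rightarrow> 'a set)
    \<Rightarrow> int \<times> 'a \<Rightarrow> int \<times> 'a \<Rightarrow> bool" where
  "hedge Z d r k0 V v w \<longleftrightarrow> horizontal_edge Z d r k0 V v w \<or> radial_edge Z d r k0 V v w"

definition hpath :: "'a set \<Rightarrow> ('a \<Rightarrow> 'a \<Rightarrow> real) \<Rightarrow> real \<Rightarrow> int \<Rightarrow> (int \<Rightarrow> 'a set)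
    \<Rightarrow> (int \<times> 'a) list \<Rightarrow> int \<times> 'a \<Rightarrow> int \<times> 'a \<Rightarrow> bool" where
  "hpath Z d r k0 V p v w \<longleftrightarrow> p \<noteq> [] \<and> hd p = v \<and> last p = w \<and>
     set p \<subseteq> hvertices k0 V \<and>
     (\<forall>i. Suc i < length p \<longrightarrow> hedge Z d r k0 V (p ! i) (p ! Suc i))"

definition hgeodesic :: "'a set \<Rightarrow> ('a \<Rightarrow> 'a \<Rightarrow> real) \<Rightarrow> real \<Rightarrow> int \<Rightarrow> (int \<Rightarrow> 'a set)
    \<Rightarrow> (int \<times> 'a) list \<Rightarrow> int \<times> 'a \<Rightarrow> int \<times> 'a \<Rightarrow> bool" where
  "hgeodesic Z d r k0 V p v w \<longleftrightarrow> hpath Z d r k0 V p v w \<and>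
     (\<forall>q. hpath Z d r k0 V q v w \<longrightarrow> length p \<le> length q)"

definition horizontal_positions :: "'a set \<Rightarrow> ('a \<Rightarrow> 'a \<Rightarrow> real) \<Rightarrow> real \<Rightarrow> int \<Rightarrow> (int \<Rightarrow> 'a set)
    \<Rightarrow> (int \<times> 'a) list \<Rightarrow> nat set" where
  "horizontal_positions Z d r k0 V p =
     {i. Suc i < length p \<and> horizontal_edge Z d r k0 V (p ! i) (p ! Suc i)}"

end

theory Submission imports Defs begin

text \<open>Call a vertex sequence a valley if its levels first decrease by one per step, then stay
  constant for at most one (horizontal) step, and then increase by one per step. A valley has at
  most one horizontal edge, and it lies on the lowest level, so it suffices to turn every geodesic
  into a valley geodesic with the same endpoints. This is done by induction on the length: given a
  valley geodesic from the second vertex x, the first edge v x is absorbed. A descending edge is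
  simply prepended. After an ascending edge, a horizontal edge x y is lifted by replacing x with a
  parent of y, while a descending edge x y would give a shortcut. After a horizontal edge, a
  second horizontal edge x y is replaced by v p y for a parent p of x, whose ball contains the
  balls of all horizontal neighbours of x since r \<le> 1/6; a descending edge x y is replaced by
  v p y for a parent p of v, and the rest is straightened by induction. All replacements rest on
  one observation: if two vertices have intersecting closed balls, then two vertices of a common
  level whose balls contain theirs are equal or adjacent.\<close>

lemma (in Metric_space) maximal_separated_covers:
  assumes "maximal_separated M d \<epsilon> S" "0 < \<epsilon>" "x \<in> M"
  shows "\<exists>u\<in>S. d x u < \<epsilon>"
proof (rule ccontr)
  assume far: "\<not> ?thesis"
  then have "x \<notin> S" using assms(2,3) by force
  moreover have "separated_set M d \<epsilon> (insert x S)"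
    using assms far unfolding maximal_separated_def separated_set_def by (auto simp: commute)
  ultimately show False using assms(1) unfolding maximal_separated_def by blast
qed

lemma (in Metric_space) mdist_le_mdiam:
  assumes "mbounded M" "x \<in> M" "y \<in> M"
  shows "d x y \<le> mdiam M d"
proof -
  obtain c where "\<forall>x\<in>M. \<forall>y\<in>M. d x y \<le> c" using assms(1) by (auto simp: mbounded_alt)
  then have "bdd_above {d x y | x y. x \<in> M \<and> y \<in> M}" by (auto intro!: bdd_aboveI)
  then show ?thesis unfolding mdiam_def by (rule cSup_upper[rotated]) (use assms in auto)
qed

inductive unit_ascent :: "int list \<Rightarrow> bool" where
  singleton: "unit_ascent [x]"
| Cons: "unit_ascent ((x + 1) # L) \<Longrightarrow> unit_ascent (x # (x + 1) # L)"

inductive valley :: "int list \<Rightarrow> bool" where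
  ascent: "unit_ascent L \<Longrightarrow> valley L"
| flat: "unit_ascent (x # L) \<Longrightarrow> valley (x # x # L)"
| descent: "valley (x # L) \<Longrightarrow> valley ((x + 1) # x # L)"

definition flat_steps :: "'a list \<Rightarrow> nat set" where
  "flat_steps L = {i. Suc i < length L \<and> L ! i = L ! Suc i}"

lemma flat_steps_singleton [simp]: "flat_steps [x] = {}"
  by (simp add: flat_steps_def)

lemma flat_steps_Cons_Cons:
  "flat_steps (x # y # L) = (if x = y then {0} else {}) \<union> Suc ` flat_steps (y # L)"
proof (rule set_eqI)
  show "i \<in> flat_steps (x # y # L) \<longleftrightarrow> i \<in> (if x = y then {0} else {}) \<union> Suc ` flat_steps (y # L)"
    for i by (cases i) (auto simp: flat_steps_def)
qed

lemma unit_ascent_Min: "unit_ascent L \<Longrightarrow> Min (set L) = hd L"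
  by (induction rule: unit_ascent.induct) auto

lemma unit_ascent_flat_steps: "unit_ascent L \<Longrightarrow> flat_steps L = {}"
  by (induction rule: unit_ascent.induct) (simp_all add: flat_steps_Cons_Cons)

lemma valley_flat_steps:
  "valley L \<Longrightarrow> card (flat_steps L) \<le> 1 \<and> (\<forall>i\<in>flat_steps L. L ! i = Min (set L))"
proof (induction rule: valley.induct)
  case (ascent L)
  then show ?case by (simp add: unit_ascent_flat_steps)
next
  case (flat x L)
  then show ?case using unit_ascent_Min[OF flat] unit_ascent_flat_steps[OF flat]
    by (simp add: flat_steps_Cons_Cons)
next
  case (descent x L)
  have "Min (set ((x + 1) # x # L)) = Min (set (x # L))"
    by (simp add: min_def)
  then show ?case using descent.IH by (auto simp: flat_steps_Cons_Cons card_image)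
qed

lemma valley_map_ConsE:
  assumes "valley (map f (x # xs))"
  obtains (ascent) "unit_ascent (map f (x # xs))"
  | (flat) y ys where "xs = y # ys" "f y = f x" "unit_ascent (map f xs)"
  | (descent) y ys where "xs = y # ys" "f x = f y + 1" "valley (map f xs)"
  using assms by (cases xs) (auto elim: valley.cases)

locale hyperbolic_approximation =
  fixes Z :: "'a set" and d :: "'a \<Rightarrow> 'a \<Rightarrow> real" and r :: real and k0 :: int
    and V :: "int \<Rightarrow> 'a set"
  assumes hyp_approx: "hyp_approx Z d r k0 V"
begin

sublocale Metric_space Z d using hyp_approx by (simp add: hyp_approx_def)

abbreviation "vert \<equiv> hvertices k0 V"
abbreviation "B \<equiv> hball Z d r"
abbreviation "cl_B \<equiv> hball_closure Z d r"
abbreviation "hor \<equiv> horizontal_edge Z d r k0 V"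
abbreviation "edge \<equiv> hedge Z d r k0 V"
abbreviation "walk \<equiv> hpath Z d r k0 V"
abbreviation "geodesic \<equiv> hgeodesic Z d r k0 V"

lemma scale_pos: "0 < r powi k"
  using hyp_approx by (simp add: hyp_approx_def)

lemma scale_step: "6 * r powi k \<le> r powi (k - 1)"
proof -
  have "r powi k = r * r powi (k - 1)"
    using hyp_approx power_int_add_1'[of r "k - 1"] by (simp add: hyp_approx_def)
  then show ?thesis
    using hyp_approx scale_pos[of "k - 1"] by (simp add: hyp_approx_def)
qed

lemma net_subset: "k0 \<le> k \<Longrightarrow> V k \<subseteq> Z"
  using hyp_approx by (auto simp: hyp_approx_def maximal_separated_def separated_set_def)

lemma net_covers: "k0 \<le> k \<Longrightarrow> x \<in> Z \<Longrightarrow> \<exists>u\<in>V k. d x u < r powi k"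
  using hyp_approx maximal_separated_covers scale_pos by (simp add: hyp_approx_def)

lemma hverticesD: "v \<in> vert \<Longrightarrow> k0 \<le> fst v \<and> snd v \<in> V (fst v) \<and> snd v \<in> Z"
  unfolding hvertices_def using net_subset by fastforce

lemma top_level_unique:
  assumes "v \<in> vert" "w \<in> vert" "fst v = k0" "fst w = k0"
  shows "v = w"
proof (rule ccontr)
  assume "v \<noteq> w"
  then have ne: "snd v \<noteq> snd w" using assms(3,4) by (simp add: prod_eq_iff)
  have in_net: "snd v \<in> V k0" "snd w \<in> V k0" "snd v \<in> Z" "snd w \<in> Z"
    using hverticesD[OF assms(1)] hverticesD[OF assms(2)] assms(3,4) by auto
  then have "r powi k0 \<le> d (snd v) (snd w)"
    using ne hyp_approx by (auto simp: hyp_approx_def maximal_separated_def separated_set_def)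
  moreover have "d (snd v) (snd w) \<le> mdiam Z d"
    using hyp_approx in_net by (intro mdist_le_mdiam) (auto simp: hyp_approx_def)
  ultimately show False using hyp_approx by (auto simp: hyp_approx_def is_k0_def)
qed

lemma center_in_hball_closure: "v \<in> vert \<Longrightarrow> snd v \<in> cl_B v"
proof -
  assume v: "v \<in> vert"
  have "snd v \<in> B v" using hverticesD[OF v] scale_pos by (simp add: hball_def)
  moreover have "B v \<subseteq> cl_B v"
    unfolding hball_closure_def by (rule closure_of_subset) (auto simp: hball_def)
  ultimately show ?thesis by blast
qed

lemma hball_closure_subset_mcball:
  assumes "v \<in> vert"
  shows "cl_B v \<subseteq> mcball (snd v) (2 * r powi fst v)"
  unfolding hball_closure_def
  by (rule closure_of_minimal) (use hverticesD[OF assms] in \<open>auto simp: hball_def commute\<close>)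

lemma hball_closure_mono: "B a \<subseteq> B b \<Longrightarrow> cl_B a \<subseteq> cl_B b"
  unfolding hball_closure_def by (rule closure_of_mono)

lemma horizontal_edge_dist:
  assumes "hor a b"
  shows "d (snd a) (snd b) \<le> 4 * r powi fst a"
proof -
  have a: "a \<in> vert" and b: "b \<in> vert" and "fst a = fst b"
    using assms by (auto simp: horizontal_edge_def)
  moreover obtain z where "z \<in> cl_B a" "z \<in> cl_B b"
    using assms by (auto simp: horizontal_edge_def)
  ultimately have "z \<in> Z" "d (snd a) z \<le> 2 * r powi fst a" "d z (snd b) \<le> 2 * r powi fst a"
    using hball_closure_subset_mcball by (fastforce simp: commute)+
  moreover have "d (snd a) (snd b) \<le> d (snd a) z + d z (snd b)"
    using triangle hverticesD[OF a] hverticesD[OF b] \<open>z \<in> Z\<close> by blast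
  ultimately show ?thesis by simp
qed

lemma horizontal_edge_level:
  assumes "hor a b"
  shows "fst b = fst a" "k0 < fst a"
proof -
  have a: "a \<in> vert" and b: "b \<in> vert" and "a \<noteq> b" and level: "fst a = fst b"
    using assms by (auto simp: horizontal_edge_def)
  then show "fst b = fst a" by simp
  show "k0 < fst a"
    using top_level_unique[OF a b] level hverticesD[OF a] \<open>a \<noteq> b\<close> by force
qed

lemma horizontal_edge_sym: "hor a b \<Longrightarrow> hor b a"
  unfolding horizontal_edge_def by (simp add: Int_commute eq_commute)

lemma hedge_sym: "edge a b \<Longrightarrow> edge b a"
  unfolding hedge_def radial_edge_def using horizontal_edge_sym by blast

lemma hedge_vertices: "edge a b \<Longrightarrow> a \<in> vert \<and> b \<in> vert"
  unfolding hedge_def horizontal_edge_def radial_edge_def by blast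

lemma hedge_cases:
  assumes "edge a b"
  obtains (horizontal) "hor a b" "fst b = fst a"
  | (rise) "fst b = fst a + 1" "B b \<subseteq> B a"
  | (descent) "fst a = fst b + 1" "B a \<subseteq> B b"
  using assms horizontal_edge_level(1) unfolding hedge_def radial_edge_def by blast

lemma hedge_same_level: "edge a b \<Longrightarrow> fst a = fst b \<Longrightarrow> hor a b"
  by (elim hedge_cases) auto

lemma radial_hedge:
  "a \<in> vert \<Longrightarrow> b \<in> vert \<Longrightarrow> fst b = fst a + 1 \<Longrightarrow> B b \<subseteq> B a \<Longrightarrow> edge a b \<and> edge b a"
  unfolding hedge_def radial_edge_def by blast

lemma containing_vertices_adjacent:
  assumes "cl_B a \<inter> cl_B b \<noteq> {}" "B a \<subseteq> B a'" "B b \<subseteq> B b'"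
    and "a' \<in> vert" "b' \<in> vert" "fst a' = fst b'"
  shows "a' = b' \<or> edge a' b'"
  using assms hball_closure_mono[OF assms(2)] hball_closure_mono[OF assms(3)]
  unfolding hedge_def horizontal_edge_def by blast

lemma hball_subset_parent:
  assumes "a \<in> vert" "u \<in> Z" "d (snd a) u < r powi (fst a - 1) + 4 * r powi fst a"
  shows "B a \<subseteq> B (fst a - 1, u)"
proof
  fix z assume "z \<in> B a"
  then have "z \<in> Z" "d z (snd a) < 2 * r powi fst a" by (auto simp: hball_def)
  moreover have "d z u \<le> d z (snd a) + d (snd a) u"
    using triangle hverticesD[OF assms(1)] assms(2) \<open>z \<in> Z\<close> by blast
  ultimately have "d z u < 2 * r powi (fst a - 1)"
    using assms(3) scale_step[of "fst a"] by linarith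
  then show "z \<in> B (fst a - 1, u)" using \<open>z \<in> Z\<close> by (simp add: hball_def)
qed

text \<open>The third conclusion needs r \<le> 1/6: a point of B a is within
  2 r^k + 4 r^k + r^(k-1) \<le> 2 r^(k-1) of u.\<close>
lemma exists_parent:
  assumes "b \<in> vert" "k0 < fst b"
  obtains u where "(fst b - 1, u) \<in> vert" "B b \<subseteq> B (fst b - 1, u)"
    "\<And>a. hor a b \<Longrightarrow> B a \<subseteq> B (fst b - 1, u)"
proof -
  obtain u where u: "u \<in> V (fst b - 1)" "d (snd b) u < r powi (fst b - 1)"
    using net_covers[of "fst b - 1" "snd b"] hverticesD[OF assms(1)] assms(2) by auto
  then have uZ: "u \<in> Z" using net_subset[of "fst b - 1"] assms(2) by auto
  have "B b \<subseteq> B (fst b - 1, u)"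
    using hball_subset_parent[OF assms(1) uZ] u(2) scale_pos[of "fst b"] by simp
  moreover have "B a \<subseteq> B (fst b - 1, u)" if "hor a b" for a
  proof -
    have a: "a \<in> vert" and level: "fst b = fst a"
      using that by (auto simp: horizontal_edge_def)
    have "d (snd a) u \<le> d (snd a) (snd b) + d (snd b) u"
      using triangle hverticesD[OF a] hverticesD[OF assms(1)] uZ by blast
    then show ?thesis
      using hball_subset_parent[OF a uZ] horizontal_edge_dist[OF that] u(2) level by simp
  qed
  moreover have "(fst b - 1, u) \<in> vert" using u(1) assms(2) by (simp add: hvertices_def)
  ultimately show ?thesis using that by metis
qed

lemma walk_iff:
  "walk p v w \<longleftrightarrow> p \<noteq> [] \<and> hd p = v \<and> last p = w \<and> set p \<subseteq> vert \<and> successively edge p"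
  by (auto simp: hpath_def successively_conv_nth)

lemma walk_singleton: "walk [u] v w \<longleftrightarrow> v = u \<and> w = u \<and> u \<in> vert"
  by (auto simp: walk_iff)

lemma walk_Cons_Cons: "walk (u # x # p) v w \<longleftrightarrow> v = u \<and> edge u x \<and> walk (x # p) x w"
  by (auto simp: walk_iff dest: hedge_vertices)

lemma walk_ConsE:
  assumes "walk q v w"
  obtains q' where "q = v # q'"
proof -
  have "q \<noteq> []" "hd q = v" using assms by (auto simp: walk_iff)
  then show thesis using that by (metis list.collapse)
qed

lemma walk_rev: "walk p v w \<Longrightarrow> walk (rev p) w v"
  by (auto simp: walk_iff hd_rev last_rev intro: successively_mono hedge_sym)

lemma walk_join: "walk p u v \<Longrightarrow> walk q v w \<Longrightarrow> walk (butlast p @ q) u w"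
proof (induction p arbitrary: u rule: induct_list012)
  case (3 x y p)
  then have "u = x" "edge x y" "walk (butlast (y # p) @ q) y w"
    by (simp_all add: walk_Cons_Cons)
  moreover have "butlast (y # p) @ q = y # tl (butlast (y # p) @ q)"
    using "3.prems" by (cases p) (auto simp: walk_iff)
  ultimately have "walk (x # butlast (y # p) @ q) u w"
    by (metis walk_Cons_Cons)
  then show ?case by simp
qed (auto simp: walk_iff)

lemma walk_to_top:
  assumes "v \<in> vert" "t \<in> vert" "fst t = k0"
  shows "\<exists>p. walk p v t"
  using assms(1)
proof (induction "nat (fst v - k0)" arbitrary: v)
  case 0
  then have "fst v = k0" using hverticesD[of v] by simp
  then have "v = t" using top_level_unique[of v t] "0" assms(2,3) by simp
  then show ?case using "0" walk_singleton by blast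
next
  case (Suc n)
  then have "k0 < fst v" by simp
  then obtain u where u: "(fst v - 1, u) \<in> vert" "B v \<subseteq> B (fst v - 1, u)"
    using exists_parent[OF Suc.prems] by metis
  then obtain p where "walk p (fst v - 1, u) t" using Suc by fastforce
  moreover obtain p' where "p = (fst v - 1, u) # p'" using calculation by (elim walk_ConsE)
  moreover have "edge v (fst v - 1, u)" using radial_hedge[OF u(1) Suc.prems _ u(2)] by simp
  ultimately show ?case using walk_Cons_Cons by blast
qed

lemma walk_exists:
  assumes "v \<in> vert" "w \<in> vert"
  shows "\<exists>p. walk p v w"
proof -
  obtain z where "z \<in> Z" using hyp_approx by (auto simp: hyp_approx_def)
  then obtain x where "x \<in> V k0" using net_covers by blast
  then have top: "(k0, x) \<in> vert" by (simp add: hvertices_def)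
  obtain p q where "walk p v (k0, x)" "walk q w (k0, x)" using walk_to_top top assms by fastforce
  then show ?thesis using walk_join walk_rev by blast
qed

lemma geodesic_exists:
  assumes "v \<in> vert" "w \<in> vert"
  shows "\<exists>p. geodesic p v w"
proof -
  obtain p where "walk p v w" "\<forall>q. walk q v w \<longrightarrow> length p \<le> length q"
    using ex_has_least_nat[of "\<lambda>p. walk p v w" _ length] walk_exists[OF assms] by blast
  then show ?thesis by (auto simp: hgeodesic_def)
qed

lemma geodesic_ConsE:
  assumes "geodesic q v w"
  obtains q' where "q = v # q'"
  using assms walk_ConsE unfolding hgeodesic_def by blast

lemma geodesic_length_eq: "geodesic p v w \<Longrightarrow> geodesic q v w \<Longrightarrow> length p = length q"
  by (auto simp: hgeodesic_def intro: antisym)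

lemma geodesic_if_length_eq:
  "geodesic p v w \<Longrightarrow> walk q v w \<Longrightarrow> length q = length p \<Longrightarrow> geodesic q v w"
  by (auto simp: hgeodesic_def)

lemma geodesic_ConsD: "geodesic (v # x # p) v w \<Longrightarrow> geodesic (x # p) x w"
proof -
  assume g: "geodesic (v # x # p) v w"
  then have "edge v x" "walk (x # p) x w" by (auto simp: hgeodesic_def walk_Cons_Cons)
  moreover have "length (x # p) \<le> length q" if q: "walk q x w" for q
  proof -
    obtain q' where "q = x # q'" using q by (elim walk_ConsE)
    then have "walk (v # q) v w" using q \<open>edge v x\<close> by (simp add: walk_Cons_Cons)
    then show ?thesis using g by (auto simp: hgeodesic_def)
  qed
  ultimately show ?thesis by (simp add: hgeodesic_def)
qed

lemma geodesic_replace_tail: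
  assumes "geodesic (v # x # p) v w" "geodesic (x # q) x w"
  shows "geodesic (v # x # q) v w"
proof (rule geodesic_if_length_eq[OF assms(1)])
  show "walk (v # x # q) v w" using assms by (auto simp: hgeodesic_def walk_Cons_Cons)
  show "length (v # x # q) = length (v # x # p)"
    using geodesic_length_eq[OF assms(2) geodesic_ConsD[OF assms(1)]] by simp
qed

lemma geodesic_replace_second:
  assumes "geodesic (v # x # y # p) v w" "edge v u" "edge u y"
  shows "geodesic (v # u # y # p) v w"
  using assms by (intro geodesic_if_length_eq[OF assms(1)]) (auto simp: hgeodesic_def walk_Cons_Cons)

lemma geodesic_no_shortcut:
  assumes "geodesic (v # x # y # p) v w"
  shows "y \<noteq> v" "\<not> edge v y"
proof -
  have tail: "walk (y # p) y w" using assms by (simp add: hgeodesic_def walk_Cons_Cons)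
  show "y \<noteq> v"
  proof
    assume "y = v"
    then have "walk (y # p) v w" using tail by simp
    then show False using assms by (auto simp: hgeodesic_def)
  qed
  show "\<not> edge v y"
  proof
    assume "edge v y"
    then have "walk (v # y # p) v w" using tail by (simp add: walk_Cons_Cons)
    then show False using assms by (auto simp: hgeodesic_def)
  qed
qed

lemma valley_geodesic_after_rise:
  assumes g: "geodesic (v # x # q) v w" and val: "valley (map fst (x # q))"
    and rise: "fst x = fst v + 1" "B x \<subseteq> B v"
  shows "\<exists>p. geodesic p v w \<and> valley (map fst p)"
  using val
proof (cases rule: valley_map_ConsE)
  case ascent
  then have "unit_ascent (map fst (v # x # q))"
    using rise(1) unit_ascent.Cons[of "fst v" "map fst q"] by simp
  then show ?thesis using g valley.ascent by blast
next
  case (flat y ys)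
  have "edge v x" "edge x y" using g flat(1) by (simp_all add: hgeodesic_def walk_Cons_Cons)
  then have v: "v \<in> vert" and y: "y \<in> vert" and hor: "hor x y"
    using hedge_vertices hedge_same_level flat(2) by auto
  have level: "fst y = fst v + 1" using rise(1) flat(2) by simp
  have "k0 < fst y" using hverticesD[OF v] level by simp
  then obtain u where "(fst y - 1, u) \<in> vert" "B y \<subseteq> B (fst y - 1, u)"
    using exists_parent[OF y] by metis
  then have u: "(fst v, u) \<in> vert" "B y \<subseteq> B (fst v, u)" using level by simp_all
  have "edge (fst v, u) y" using radial_hedge[OF u(1) y _ u(2)] level by simp
  moreover have "v = (fst v, u) \<or> edge v (fst v, u)"
    using containing_vertices_adjacent[OF _ rise(2) u(2) v u(1)] hor
    by (simp add: horizontal_edge_def)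
  ultimately have "edge v (fst v, u)"
    using geodesic_no_shortcut(2)[OF g[unfolded flat(1)]] by auto
  then have "geodesic (v # (fst v, u) # y # ys) v w"
    using geodesic_replace_second[OF g[unfolded flat(1)]] \<open>edge (fst v, u) y\<close> by blast
  moreover have "unit_ascent (fst v # fst y # map fst ys)"
    using unit_ascent.Cons[of "fst v" "map fst ys"] flat(3) flat(1) level by simp
  then have "valley (map fst (v # (fst v, u) # y # ys))" by (simp add: valley.flat)
  ultimately show ?thesis by blast
next
  case (descent y ys)
  have "edge v x" "edge x y" using g descent(1) by (simp_all add: hgeodesic_def walk_Cons_Cons)
  then have v: "v \<in> vert" and x: "x \<in> vert" and y: "y \<in> vert" and "B x \<subseteq> B y"
    using hedge_vertices descent(2) by (auto elim: hedge_cases)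
  moreover have "cl_B x \<inter> cl_B x \<noteq> {}" using center_in_hball_closure[OF x] by blast
  ultimately have "v = y \<or> edge v y"
    using containing_vertices_adjacent[of x x v y] rise descent(2) by simp
  then show ?thesis using geodesic_no_shortcut[OF g[unfolded descent(1)]] by blast
qed

lemma valley_or_descending_geodesic_after_flat:
  assumes g: "geodesic (v # x # q) v w" and val: "valley (map fst (x # q))" and hor: "hor v x"
  shows "\<exists>p. geodesic p v w \<and> (valley (map fst p) \<or> (\<exists>u s. p = v # u # s \<and> fst v = fst u + 1))"
  using val
proof (cases rule: valley_map_ConsE)
  case ascent
  then have "valley (map fst (v # x # q))"
    using horizontal_edge_level(1)[OF hor] valley.flat by (metis list.simps(9))
  then show ?thesis using g by blast
next
  case (flat y ys)
  have "edge x y" using g flat(1) by (simp add: hgeodesic_def walk_Cons_Cons)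
  then have x: "x \<in> vert" and y: "y \<in> vert" and "hor y x"
    using hedge_vertices hedge_same_level flat(2) horizontal_edge_sym by auto
  have v: "v \<in> vert" using hor by (simp add: horizontal_edge_def)
  obtain u where u: "(fst x - 1, u) \<in> vert" "\<And>a. hor a x \<Longrightarrow> B a \<subseteq> B (fst x - 1, u)"
    using exists_parent[OF x horizontal_edge_level(2)[OF horizontal_edge_sym[OF hor]]] by metis
  have "edge v (fst x - 1, u)" "edge (fst x - 1, u) y"
    using radial_hedge[OF u(1) v] radial_hedge[OF u(1) y] u(2) hor \<open>hor y x\<close>
      horizontal_edge_level(1)[OF hor] flat(2) by auto
  then have "geodesic (v # (fst x - 1, u) # y # ys) v w"
    using geodesic_replace_second[OF g[unfolded flat(1)]] by blast
  moreover have "fst v = fst (fst x - 1, u) + 1" using horizontal_edge_level(1)[OF hor] by simp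
  ultimately show ?thesis by blast
next
  case (descent y ys)
  have "edge x y" using g descent(1) by (simp add: hgeodesic_def walk_Cons_Cons)
  then have y: "y \<in> vert" and "B x \<subseteq> B y"
    using hedge_vertices descent(2) by (auto elim: hedge_cases)
  have v: "v \<in> vert" and level: "fst v = fst y + 1"
    using hor horizontal_edge_level(1)[OF hor] descent(2) by (auto simp: horizontal_edge_def)
  have "k0 < fst v" using hverticesD[OF y] level by simp
  then obtain u where "(fst v - 1, u) \<in> vert" "B v \<subseteq> B (fst v - 1, u)"
    using exists_parent[OF v] by metis
  then have u: "(fst y, u) \<in> vert" "B v \<subseteq> B (fst y, u)" using level by simp_all
  have "(fst y, u) = y \<or> edge (fst y, u) y"
    using containing_vertices_adjacent[OF _ u(2) \<open>B x \<subseteq> B y\<close> u(1) y] hor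
    by (simp add: horizontal_edge_def)
  moreover have "edge v (fst y, u)" using radial_hedge[OF u(1) v _ u(2)] level by simp
  ultimately have "edge (fst y, u) y"
    using geodesic_no_shortcut(2)[OF g[unfolded descent(1)]] by auto
  then have "geodesic (v # (fst y, u) # y # ys) v w"
    using geodesic_replace_second[OF g[unfolded descent(1)]] \<open>edge v (fst y, u)\<close> by blast
  then show ?thesis using level by fastforce
qed

lemma exists_valley_geodesic: "geodesic p v w \<Longrightarrow> \<exists>q. geodesic q v w \<and> valley (map fst q)"
proof (induction "length p" arbitrary: p v rule: less_induct)
  case less
  have valley_tail: "\<exists>t. geodesic (v # x # t) v w \<and> valley (map fst (x # t))"
    if g: "geodesic (v # x # s) v w" "length (v # x # s) = length p" for x s
  proof -
    obtain q where q: "geodesic q x w" "valley (map fst q)"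
      using less.hyps[of "x # s" x] geodesic_ConsD[OF g(1)] g(2) by force
    then obtain t where "q = x # t" by (elim geodesic_ConsE)
    then show ?thesis using geodesic_replace_tail[OF g(1)] q by blast
  qed
  have descend: "\<exists>q. geodesic q v w \<and> valley (map fst q)"
    if g: "geodesic (v # u # s) v w" "length (v # u # s) = length p" "fst v = fst u + 1" for u s
  proof -
    obtain t where "geodesic (v # u # t) v w" "valley (map fst (u # t))"
      using valley_tail[OF g(1,2)] by blast
    then show ?thesis using valley.descent g(3) by (metis list.simps(9))
  qed
  obtain rest where p: "p = v # rest" using less.prems by (elim geodesic_ConsE)
  show ?case
  proof (cases rest)
    case Nil
    then show ?thesis using less.prems p unit_ascent.singleton valley.ascent by fastforce
  next
    case (Cons x s)
    then obtain t where g: "geodesic (v # x # t) v w" and val: "valley (map fst (x # t))"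
      using valley_tail less.prems p by blast
    have "edge v x" using g by (simp add: hgeodesic_def walk_Cons_Cons)
    then show ?thesis
    proof (cases rule: hedge_cases)
      case horizontal
      then obtain p' where "geodesic p' v w"
        "valley (map fst p') \<or> (\<exists>u s. p' = v # u # s \<and> fst v = fst u + 1)"
        using valley_or_descending_geodesic_after_flat[OF g val] by blast
      then show ?thesis using descend geodesic_length_eq less.prems by metis
    next
      case rise
      then show ?thesis using valley_geodesic_after_rise[OF g val] by blast
    next
      case descent
      then show ?thesis using descend g geodesic_length_eq less.prems by metis
    qed
  qed
qed

lemma horizontal_positions_eq_flat_steps:
  assumes "walk p v w"
  shows "horizontal_positions Z d r k0 V p = flat_steps (map fst p)"
proof -
  have "hor (p ! i) (p ! Suc i) \<longleftrightarrow> fst (p ! i) = fst (p ! Suc i)" if i: "Suc i < length p" for i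
  proof
    show "hor (p ! i) (p ! Suc i) \<Longrightarrow> fst (p ! i) = fst (p ! Suc i)"
      using horizontal_edge_level(1) by simp
    have "edge (p ! i) (p ! Suc i)" using assms i by (simp add: hpath_def)
    then show "fst (p ! i) = fst (p ! Suc i) \<Longrightarrow> hor (p ! i) (p ! Suc i)"
      by (rule hedge_same_level)
  qed
  then show ?thesis by (auto simp: horizontal_positions_def flat_steps_def)
qed

end

theorem mainTheorem8:
  fixes Z :: "'a set" and d :: "'a \<Rightarrow> 'a \<Rightarrow> real" and r :: real and k0 :: int
    and V :: "int \<Rightarrow> 'a set"
  assumes "hyp_approx Z d r k0 V"
    and "v \<in> hvertices k0 V" and "w \<in> hvertices k0 V"
  shows "\<exists>p. hgeodesic Z d r k0 V p v w \<and>
           card (horizontal_positions Z d r k0 V p) \<le> 1 \<and>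
           (\<forall>i \<in> horizontal_positions Z d r k0 V p.
              fst (p ! i) = Min (fst ` set p))"
proof -
  interpret hyperbolic_approximation Z d r k0 V by (rule hyperbolic_approximation.intro) fact
  obtain p where "geodesic p v w" using geodesic_exists[OF assms(2,3)] by blast
  then obtain q where q: "geodesic q v w" "valley (map fst q)"
    using exists_valley_geodesic[of p v w] by blast
  then have flat: "horizontal_positions Z d r k0 V q = flat_steps (map fst q)"
    using horizontal_positions_eq_flat_steps[of q v w] by (simp add: hgeodesic_def)
  show ?thesis
  proof (intro exI conjI ballI)
    show "geodesic q v w" by (fact q(1))
    show "card (horizontal_positions Z d r k0 V q) \<le> 1"
      using valley_flat_steps[OF q(2)] flat by simp
    fix i assume "i \<in> horizontal_positions Z d r k0 V q"
    then have i: "i \<in> flat_steps (map fst q)" using flat by simp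
    then have "map fst q ! i = Min (set (map fst q))" using valley_flat_steps[OF q(2)] by blast
    moreover have "i < length q" using i by (simp add: flat_steps_def)
    ultimately show "fst (q ! i) = Min (fst ` set q)" by simp
  qed
qed

end
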